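(* Let $D$ be a positive squarefree integer with $N(\varepsilon)=-1$. The meromorphic continuation of $Z_D^{\mathrm{odd}}(s)$ is holomorphic at every negative odd integer and vanishes there: $Z_D^{\mathrm{odd}}(-(2j+1))=0$ for all integers $j\ge0$.
   Context: $D$ positive squarefree, $\mathcal{O}_D$ the ring of integers of $\mathbb{Q}(\sqrt D)\subset\mathbb{R}$, $\varepsilon>1$ its fundamental unit, $\overline{\varepsilon}$ its conjugate, $N$ the norm. $q=D$ if $D\equiv1\bmod4$, else $q=4D$. $F_D(n)=(\varepsilon^n-\overline{\varepsilon}^{\,n})/\sqrt q$, and $Z_D^{\mathrm{odd}}(s)=\sum_{n\ge1}F_D(2n-1)^{-s}$ for $\operatorname{Re}s>0$, continued meromorphically to $\mathbb{C}$. *)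

theory Defs
  imports "HOL-Complex_Analysis.Complex_Analysis" "HOL-Computational_Algebra.Squarefree"
begin

text \<open>Integral basis generator of the ring of integers of Q(sqrt D), viewed inside the reals.\<close>
definition qomega :: "nat \<Rightarrow> real" where
  "qomega D = (if D mod 4 = 1 then (1 + sqrt (real D)) / 2 else sqrt (real D))"

definition ring_of_integers :: "nat \<Rightarrow> real set" where
  "ring_of_integers D = {of_int a + of_int b * qomega D | a b :: int. True}"

definition fund_unit :: "nat \<Rightarrow> real" where
  "fund_unit D = Inf {x. x \<in> ring_of_integers D \<and> x > 1 \<and> inverse x \<in> ring_of_integers D}"

definition qconj :: "nat \<Rightarrow> real \<Rightarrow> real" where
  "qconj D x = (THE y. \<exists>a b :: rat. x = of_rat a + of_rat b * sqrt (real D)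
                                 \<and> y = of_rat a - of_rat b * sqrt (real D))"

definition qnorm :: "nat \<Rightarrow> real \<Rightarrow> real" where
  "qnorm D x = x * qconj D x"

definition qdisc :: "nat \<Rightarrow> nat" where
  "qdisc D = (if D mod 4 = 1 then D else 4 * D)"

definition F_D :: "nat \<Rightarrow> nat \<Rightarrow> real" where
  "F_D D n = (fund_unit D ^ n - qconj D (fund_unit D) ^ n) / sqrt (real (qdisc D))"

text \<open>The series Z_D^odd(s) = sum over n >= 1 of F_D(2n-1)^(-s) (reindexed from n = 0).\<close>
definition Z_odd :: "nat \<Rightarrow> complex \<Rightarrow> complex" where
  "Z_odd D s = (\<Sum>n. complex_of_real (F_D D (2 * n + 1)) powr (- s))"

end

theory Submission
  imports Defs
begin

text \<open>
  Since N(eps) = -1, the conjugate of eps is -1/eps, so for odd m one gets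
  F_D(m) = kappa (e^(mL) + e^(-mL)) with L = |ln |eps|| > 0. Writing
  (e^(mL) + e^(-mL))^(-s) = e^(-mLs) (1 + e^(-2mL))^(-s), expanding binomially and summing the
  geometric series over odd m first gives, for Re s > 0,
  Z(s) = kappa^(-s) * sum_k binom(-s, k) / (2 sinh (L (s + 2k))).
  Once finitely many terms are removed this series converges locally uniformly, so it is
  meromorphic on the whole plane. At s = -n with n odd it is the finite sum
  sum_(k <= n) binom(n, k) / (2 sinh (L (2k - n))): no denominator vanishes since 2k - n is
  nonzero, and the terms k and n - k cancel because sinh is odd.
\<close>

section \<open>Binomial coefficients and double series\<close>

lemma norm_pochhammer_le:
  fixes z :: complex
  assumes "norm z \<le> R"
  shows "norm (pochhammer z k) \<le> pochhammer R k"
proof (induction k)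
  case 0 then show ?case by simp
next
  case (Suc k)
  have "norm (pochhammer z (Suc k)) = norm (pochhammer z k) * norm (z + of_nat k)"
    by (simp add: pochhammer_Suc norm_mult)
  also have "\<dots> \<le> pochhammer R k * (R + of_nat k)"
  proof (rule mult_mono)
    show "norm (z + of_nat k) \<le> R + of_nat k"
      using norm_triangle_ineq[of z "of_nat k"] assms by (simp add: norm_of_nat)
  qed (use Suc order_trans[OF norm_ge_zero assms] order_trans[OF norm_ge_zero Suc.IH] in auto)
  finally show ?case by (simp add: pochhammer_Suc)
qed

lemma norm_gbinomial_le:
  fixes a :: complex
  assumes "norm a \<le> R"
  shows "norm (a gchoose k) \<le> pochhammer R k / fact k"
proof -
  have "norm (a gchoose k) = norm (pochhammer (-a) k) / fact k"
    by (simp add: gbinomial_pochhammer norm_mult norm_divide norm_power)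
  also have "\<dots> \<le> pochhammer R k / fact k"
    by (intro divide_right_mono norm_pochhammer_le) (use assms in auto)
  finally show ?thesis .
qed

lemma pochhammer_sums:
  fixes R y :: real
  assumes "0 \<le> y" "y < 1"
  shows "(\<lambda>k. pochhammer R k / fact k * y ^ k) sums ((1 - y) powr (-R))"
proof -
  have "(\<lambda>k. ((-R) gchoose k) * (-y) ^ k) sums ((1 + (-y)) powr (-R))"
    by (rule gen_binomial_real) (use assms in auto)
  moreover have "((-R) gchoose k) * (-y) ^ k = pochhammer R k / fact k * y ^ k" for k
  proof -
    have "((-R) gchoose k) * (-y) ^ k = ((-1)^k * (-1)^k) * (pochhammer R k / fact k * y ^ k)"
      by (simp add: gbinomial_pochhammer power_minus[of y] mult_ac)
    also have "(-1::real)^k * (-1)^k = 1"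
      by (simp add: power_mult_distrib[symmetric])
    finally show ?thesis by simp
  qed
  ultimately show ?thesis by simp
qed

lemma analytic_on_gbinomial_uminus: "(\<lambda>s::complex. (-s) gchoose k) analytic_on A"
  unfolding gbinomial_prod_rev by (intro analytic_intros) auto

lemma sums_swap_of_product_bound:
  fixes a :: "nat \<Rightarrow> nat \<Rightarrow> 'a::{banach, uniform_topological_group_add}"
  assumes bound: "\<And>n k. norm (a n k) \<le> u n * v k"
    and u: "summable u" "\<And>n. 0 \<le> u n" and v: "summable v" "\<And>k. 0 \<le> v k"
    and rows: "\<And>n. (\<lambda>k. a n k) sums r n" and cols: "\<And>k. (\<lambda>n. a n k) sums c k"
  shows "r sums suminf c"
proof -
  have uv: "(\<lambda>(n, k). u n * v k) summable_on UNIV \<times> UNIV"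
  proof (rule summable_on_SigmaI[where g = "\<lambda>n. u n * suminf v"])
    show "((\<lambda>k. case (n, k) of (n, k) \<Rightarrow> u n * v k) has_sum u n * suminf v) UNIV" for n
      using sums_nonneg_imp_has_sum[OF sums_mult[OF summable_sums[OF v(1)], of "u n"]] u v
      by simp
    show "(\<lambda>n. u n * suminf v) summable_on UNIV"
      using summable_mult2[OF u(1)] u(2) suminf_nonneg[OF v]
      by (subst summable_on_UNIV_nonneg_real_iff) auto
  qed (use u v in auto)
  have "(\<lambda>x. norm ((\<lambda>(n, k). u n * v k) x)) summable_on UNIV \<times> UNIV"
    using uv by (rule summable_on_cong[THEN iffD1, rotated]) (use u v in auto)
  hence "(\<lambda>x. norm ((\<lambda>(n, k). a n k) x)) summable_on UNIV \<times> UNIV"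
    by (rule Infinite_Sum.abs_summable_on_comparison_test) (use bound u v in auto)
  hence "(\<lambda>(n, k). a n k) summable_on UNIV \<times> UNIV"
    by (rule Infinite_Sum.abs_summable_summable)
  then obtain S where S: "((\<lambda>(n, k). a n k) has_sum S) (UNIV \<times> UNIV)"
    by (auto simp: summable_on_def)
  have row_has_sum: "((\<lambda>k. a n k) has_sum r n) UNIV" for n
    by (rule norm_summable_imp_has_sum[OF _ rows])
       (rule summable_comparison_test[OF _ summable_mult[OF v(1)]], use bound in auto)
  have col_has_sum: "((\<lambda>n. a n k) has_sum c k) UNIV" for k
    by (rule norm_summable_imp_has_sum[OF _ cols])
       (rule summable_comparison_test[OF _ summable_mult2[OF u(1)]], use bound in auto)
  have "(r has_sum S) UNIV"
    by (rule has_sum_Sigma'[OF S]) (use row_has_sum in simp)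
  hence "r sums S"
    by (rule has_sum_imp_sums)
  moreover have "((\<lambda>(k, n). a n k) has_sum S) (UNIV \<times> UNIV)"
    using has_sum_swap[THEN iffD1, OF S] by (simp only: case_prod_unfold fst_conv snd_conv)
  hence "(c has_sum S) UNIV"
    by (rule has_sum_Sigma') (use col_has_sum in simp)
  hence "c sums S"
    by (rule has_sum_imp_sums)
  ultimately show ?thesis by (simp add: sums_iff)
qed

section \<open>The continuation as a series of hyperbolic cosecants\<close>

text \<open>\<open>half_csch L w = 1 / (2 sinh (L w))\<close>, written so that its expansion in powers of
  \<open>exp (-L w)\<close> is visible.\<close>

definition half_csch :: "real \<Rightarrow> complex \<Rightarrow> complex" where
  "half_csch L w = exp (-(of_real L * w)) / (1 - exp (-(2 * of_real L * w)))"

lemma half_csch_sums: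
  assumes "L > 0" and "Re w > 0"
  shows "(\<lambda>n. exp (-(of_nat (2*n+1) * of_real L * w))) sums half_csch L w"
proof -
  define q where "q = exp (-(2 * of_real L * w))"
  have "norm q < 1" using assms by (simp add: q_def)
  hence "(\<lambda>n. exp (-(of_real L * w)) * q ^ n) sums (exp (-(of_real L * w)) * (1 / (1 - q)))"
    by (intro sums_mult geometric_sums)
  moreover have "exp (-(of_real L * w)) * q ^ n = exp (-(of_nat (2*n+1) * of_real L * w))" for n
  proof -
    have "exp (-(of_real L * w)) * q ^ n = exp (-(of_real L * w) + of_nat n * (-(2 * of_real L * w)))"
      by (simp only: q_def exp_of_nat_mult exp_add)
    also have "-(of_real L * w) + of_nat n * (-(2 * of_real L * w)) = -(of_nat (2*n+1) * of_real L * w)"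
      by (simp add: algebra_simps)
    finally show ?thesis .
  qed
  ultimately show ?thesis by (simp add: half_csch_def q_def)
qed

lemma half_csch_minus:
  assumes "exp (2 * of_real L * w) \<noteq> 1"
  shows "half_csch L (-w) = - half_csch L w"
proof -
  define a where "a = exp (of_real L * w)"
  have a: "a \<noteq> 0" "a\<^sup>2 \<noteq> 1"
    using assms by (simp_all add: a_def exp_double[symmetric] mult.assoc)
  have "half_csch L (-w) = a / (1 - a\<^sup>2)"
    by (simp add: half_csch_def a_def exp_double[symmetric] mult.assoc)
  moreover have "half_csch L w = inverse a / (1 - inverse a ^ 2)"
    by (simp add: half_csch_def a_def exp_minus exp_double[symmetric] mult.assoc power_inverse)
  moreover have "inverse a / (1 - inverse a ^ 2) = - (a / (1 - a\<^sup>2))"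
    using a by (simp add: field_simps power2_eq_square)
  ultimately show ?thesis by simp
qed

lemma half_csch_denominator_nonzero:
  assumes "L \<noteq> 0" and "Re w \<noteq> 0"
  shows "1 - exp (-(2 * of_real L * w)) \<noteq> 0"
  using assms by (auto simp: exp_eq_1)

lemma norm_half_csch_le:
  assumes "L > 0" and "Re w * L \<ge> 1"
  shows "norm (half_csch L w) \<le> 2 * exp (-(L * Re w))"
proof -
  have "exp (-(2 * L * Re w)) \<le> exp (-2)"
    using assms by (simp add: mult_ac)
  also have "exp (-2::real) \<le> 1/2"
    using exp_ge_add_one_self[of 2] by (simp add: exp_minus field_simps)
  finally have small: "norm (exp (-(2 * of_real L * w))) \<le> 1/2"
    by simp
  have "1 - norm (exp (-(2 * of_real L * w))) \<le> norm (1 - exp (-(2 * of_real L * w)))"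
    by (metis norm_one norm_triangle_ineq2)
  hence denominator: "norm (1 - exp (-(2 * of_real L * w))) \<ge> 1/2"
    using small by linarith
  have "norm (half_csch L w) = exp (-(L * Re w)) / norm (1 - exp (-(2 * of_real L * w)))"
    by (simp add: half_csch_def norm_divide)
  also have "\<dots> \<le> exp (-(L * Re w)) / (1/2)"
    by (rule divide_left_mono) (use denominator in auto)
  finally show ?thesis by simp
qed

definition csch_binomial_term :: "real \<Rightarrow> complex \<Rightarrow> nat \<Rightarrow> complex" where
  "csch_binomial_term L s k = ((-s) gchoose k) * half_csch L (s + 2 * of_nat k)"

lemma csch_binomial_term_eq:
  "csch_binomial_term L s k = ((-s) gchoose k) * (exp (-(of_real L * (s + 2 * of_nat k))) /
     (1 - exp (-(2 * of_real L * (s + 2 * of_nat k)))))"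
  by (simp add: csch_binomial_term_def half_csch_def)

lemma analytic_on_csch_binomial_term:
  assumes "L \<noteq> 0" and "\<And>s. s \<in> A \<Longrightarrow> Re s + 2 * real k \<noteq> 0"
  shows "(\<lambda>s. csch_binomial_term L s k) analytic_on A"
  unfolding csch_binomial_term_eq
  by (intro analytic_intros analytic_on_gbinomial_uminus half_csch_denominator_nonzero)
     (use assms in auto)

lemma meromorphic_on_csch_binomial_term: "(\<lambda>s. csch_binomial_term L s k) meromorphic_on A"
  unfolding csch_binomial_term_eq
  by (intro meromorphic_intros analytic_on_imp_meromorphic_on analytic_on_gbinomial_uminus
        analytic_intros)

lemma norm_csch_binomial_term_le:
  assumes L: "L > 0" and s: "norm s \<le> R" and k: "(2 * real k - R) * L \<ge> 1"
  shows "norm (csch_binomial_term L s k)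
           \<le> 2 * exp (R * L) * (pochhammer R k / fact k * exp (-2*L) ^ k)"
proof -
  have Re: "Re s \<ge> - R" using s abs_Re_le_cmod[of s] by linarith
  have "Re (s + 2 * of_nat k) * L \<ge> (2 * real k - R) * L"
    using Re L by (intro mult_right_mono) auto
  hence "norm (half_csch L (s + 2 * of_nat k)) \<le> 2 * exp (-(L * (Re s + 2 * real k)))"
    using norm_half_csch_le[OF L, of "s + 2 * of_nat k"] k by simp
  also have "exp (-(L * (Re s + 2 * real k))) \<le> exp (-(L * (2 * real k - R)))"
    using Re L by (intro exp_mono) (auto intro!: mult_left_mono)
  also have "\<dots> = exp (R * L) * exp (-2*L) ^ k"
    by (simp add: exp_of_nat_mult[symmetric] exp_add[symmetric] algebra_simps)
  finally have csch: "norm (half_csch L (s + 2 * of_nat k)) \<le> 2 * (exp (R * L) * exp (-2*L) ^ k)"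
    by simp
  have binom: "norm ((-s) gchoose k) \<le> pochhammer R k / fact k"
    by (rule norm_gbinomial_le) (use s in simp)
  have "norm (csch_binomial_term L s k)
          \<le> (pochhammer R k / fact k) * (2 * (exp (R * L) * exp (-2*L) ^ k))"
    unfolding csch_binomial_term_def norm_mult
    by (rule mult_mono[OF binom csch]) (use order_trans[OF norm_ge_zero binom] in auto)
  thus ?thesis by (simp add: mult_ac)
qed

lemma eventually_sequentially_linear_ge_one:
  assumes L: "L > 0"
  shows "\<forall>\<^sub>F k in sequentially. (2 * real k - R) * L \<ge> 1"
proof (rule eventually_sequentiallyI)
  fix k assume "nat \<lceil>(1/L + R)/2\<rceil> \<le> k"
  hence "(1/L + R)/2 \<le> real k"
    by linarith
  hence "(1/L) * L \<le> (2 * real k - R) * L"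
    using L by (intro mult_right_mono) (auto simp: field_simps)
  thus "(2 * real k - R) * L \<ge> 1"
    using L by simp
qed

lemma csch_binomial_series_tail_holomorphic:
  assumes L: "L > 0"
  obtains K G where "\<And>s. s \<in> ball 0 R \<Longrightarrow> (\<lambda>n. csch_binomial_term L s (n + K)) sums G s"
    and "G holomorphic_on ball 0 R"
proof -
  obtain K where large: "\<And>k. k \<ge> K \<Longrightarrow> (2 * real k - R) * L \<ge> 1"
    using eventually_sequentially_linear_ge_one[OF L] by (auto simp: eventually_sequentially)
  define q where "q = exp (-2 * L)"
  have q: "0 \<le> q" "q < 1" using L by (auto simp: q_def)
  define h where "h n = 2 * exp (R * L) * (pochhammer R (n + K) / fact (n + K) * q ^ (n + K))" for n
  have "summable h"
    unfolding h_def
    by (intro summable_mult summable_ignore_initial_segment sums_summable[OF pochhammer_sums[OF q]])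
  have holo: "(\<lambda>s. csch_binomial_term L s (n + K)) holomorphic_on ball 0 R" for n
  proof (intro analytic_imp_holomorphic analytic_on_csch_binomial_term)
    fix s :: complex assume "s \<in> ball 0 R"
    hence "Re s > - R"
      using abs_Re_le_cmod[of s] by auto
    moreover have "(2 * real (n + K) - R) * L > 0"
      using large[of "n + K"] by simp
    hence "2 * real (n + K) - R > 0"
      using L by (simp add: zero_less_mult_iff)
    ultimately show "Re s + 2 * real (n + K) \<noteq> 0"
      by linarith
  qed (use L in simp)
  obtain G G' where G: "\<forall>s \<in> ball 0 R. ((\<lambda>n. csch_binomial_term L s (n + K)) sums G s) \<and>
      ((\<lambda>n. deriv (\<lambda>s. csch_binomial_term L s (n + K)) s) sums G' s) \<and> (G has_field_derivative G' s) (at s)"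
  proof (rule series_and_derivative_comparison[OF _ \<open>summable h\<close>])
    show "((\<lambda>s. csch_binomial_term L s (n + K)) has_field_derivative
            deriv (\<lambda>s. csch_binomial_term L s (n + K)) s) (at s)" if "s \<in> ball 0 R" for n s
      by (rule holomorphic_derivI[OF holo _ that]) simp
    show "\<forall>\<^sub>F n in sequentially. \<forall>s\<in>ball 0 R. norm (csch_binomial_term L s (n + K)) \<le> h n"
      unfolding h_def q_def
      by (intro always_eventually allI ballI norm_csch_binomial_term_le[OF L _ large]) auto
  qed auto
  have "G holomorphic_on ball 0 R"
    using G by (subst holomorphic_on_open) auto
  with G show ?thesis
    by (intro that) blast+
qed

lemma csch_binomial_series_local:
  assumes "L > 0"
  obtains K T where "T analytic_on {z}"
    "\<forall>\<^sub>F s in nhds z. (\<Sum>k. csch_binomial_term L s k) = T s + (\<Sum>k<K. csch_binomial_term L s k)"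
proof -
  obtain K G where sums: "\<And>s. s \<in> ball 0 (norm z + 1) \<Longrightarrow> (\<lambda>n. csch_binomial_term L s (n + K)) sums G s"
    and G: "G holomorphic_on ball 0 (norm z + 1)"
    using csch_binomial_series_tail_holomorphic[OF assms, of "norm z + 1"] by blast
  have "G analytic_on {z}"
    using G by (rule holomorphic_on_imp_analytic_at) auto
  moreover have "\<forall>\<^sub>F s in nhds z. s \<in> ball 0 (norm z + 1)"
    by (intro eventually_nhds_in_open) auto
  hence "\<forall>\<^sub>F s in nhds z. (\<Sum>k. csch_binomial_term L s k) = G s + (\<Sum>k<K. csch_binomial_term L s k)"
  proof eventually_elim
    case (elim s)
    hence "(\<lambda>k. csch_binomial_term L s k) sums (G s + (\<Sum>k<K. csch_binomial_term L s k))"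
      by (rule sums_iff_shift[THEN iffD1, OF sums])
    thus ?case by (simp add: sums_iff)
  qed
  ultimately show ?thesis by (rule that)
qed

lemma meromorphic_on_csch_binomial_series:
  assumes "L > 0"
  shows "(\<lambda>s. \<Sum>k. csch_binomial_term L s k) meromorphic_on A"
proof (subst meromorphic_on_meromorphic_at, intro ballI)
  fix z assume "z \<in> A"
  obtain K T where T: "T analytic_on {z}"
    and eq: "\<forall>\<^sub>F s in nhds z. (\<Sum>k. csch_binomial_term L s k) = T s + (\<Sum>k<K. csch_binomial_term L s k)"
    using csch_binomial_series_local[OF assms] .
  have "(\<lambda>s. T s + (\<Sum>k<K. csch_binomial_term L s k)) meromorphic_on {z}"
    by (intro meromorphic_intros analytic_on_imp_meromorphic_on T meromorphic_on_csch_binomial_term)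
  moreover have "\<forall>\<^sub>F s in at z. (\<Sum>k. csch_binomial_term L s k) = T s + (\<Sum>k<K. csch_binomial_term L s k)"
    using eq by (simp add: eventually_at_filter eventually_mono)
  ultimately show "(\<lambda>s. \<Sum>k. csch_binomial_term L s k) meromorphic_on {z}"
    by (subst meromorphic_on_cong) auto
qed

lemma csch_binomial_term_neg_nat:
  "csch_binomial_term L (- of_nat n) k =
     (if k \<le> n then of_nat (n choose k) * half_csch L (of_int (2 * int k - int n)) else 0)"
  by (simp add: csch_binomial_term_def binomial_gbinomial[symmetric])

lemma sum_binomial_half_csch_odd:
  assumes "L > 0" and "odd n"
  shows "(\<Sum>k=0..n. of_nat (n choose k) * half_csch L (of_int (2 * int k - int n))) = 0"
proof -
  define \<phi> where "\<phi> k = of_nat (n choose k) * half_csch L (of_int (2 * int k - int n))" for k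
  have antisym: "\<phi> (n + 0 - k) = - \<phi> k" if "k \<in> {0..n}" for k
  proof -
    have "2 * int k - int n \<noteq> 0" using \<open>odd n\<close> by presburger
    hence "exp (2 * of_real L * of_int (2 * int k - int n)) \<noteq> (1::complex)"
      using \<open>L > 0\<close> by (auto simp: exp_eq_1)
    moreover have "of_int (2 * int (n - k) - int n) = - (of_int (2 * int k - int n) :: complex)"
      using that by (simp add: of_nat_diff)
    ultimately show ?thesis
      using that half_csch_minus[of L "of_int (2 * int k - int n)"]
      by (simp add: \<phi>_def binomial_symmetric[symmetric])
  qed
  have "sum \<phi> {0..n} = sum (\<lambda>k. \<phi> (n + 0 - k)) {0..n}"
    by (rule sum.atLeastAtMost_rev)
  also have "\<dots> = - sum \<phi> {0..n}"
    using antisym by (simp add: sum_negf)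
  finally show ?thesis unfolding \<phi>_def by simp
qed

lemma csch_binomial_series_neg_odd:
  assumes L: "L > 0" and n: "odd n"
  shows "(\<lambda>s. \<Sum>k. csch_binomial_term L s k) analytic_on {- of_nat n}"
    and "(\<Sum>k. csch_binomial_term L (- of_nat n) k) = 0"
proof -
  obtain K T where T: "T analytic_on {- of_nat n}"
    and eq: "\<forall>\<^sub>F s in nhds (- of_nat n). (\<Sum>k. csch_binomial_term L s k) = T s + (\<Sum>k<K. csch_binomial_term L s k)"
    using csch_binomial_series_local[OF L] .
  have "Re (- of_nat n) + 2 * real k \<noteq> 0" for k
  proof -
    have "real (2 * k) \<noteq> real n"
      using n by (metis dvd_triv_left of_nat_eq_iff)
    thus ?thesis by simp
  qed
  hence "(\<lambda>s. T s + (\<Sum>k<K. csch_binomial_term L s k)) analytic_on {- of_nat n}"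
    using L by (intro analytic_intros T analytic_on_csch_binomial_term) auto
  thus "(\<lambda>s. \<Sum>k. csch_binomial_term L s k) analytic_on {- of_nat n}"
    using analytic_at_cong[OF eq refl] by simp
  have "(\<Sum>k. csch_binomial_term L (- of_nat n) k) = (\<Sum>k=0..n. csch_binomial_term L (- of_nat n) k)"
    by (rule suminf_finite) (auto simp: csch_binomial_term_neg_nat)
  also have "\<dots> = (\<Sum>k=0..n. of_nat (n choose k) * half_csch L (of_int (2 * int k - int n)))"
    by (intro sum.cong) (auto simp: csch_binomial_term_neg_nat)
  finally show "(\<Sum>k. csch_binomial_term L (- of_nat n) k) = 0"
    using sum_binomial_half_csch_odd[OF L n] by simp
qed

section \<open>Agreement with the series in the half-plane of convergence\<close>

lemma exp_plus_exp_powr_sums: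
  fixes t :: real and s :: complex
  assumes "t > 0"
  shows "(\<lambda>k. ((-s) gchoose k) * exp (-(of_real t * (s + 2 * of_nat k))))
           sums (of_real (exp t + exp (-t)) powr (-s))"
proof -
  have "(\<lambda>k. ((-s) gchoose k) * of_real (exp t) powr (-s - of_nat k) * of_real (exp (-t)) ^ k)
          sums (of_real (exp t + exp (-t)) powr (-s))"
    by (rule gen_binomial_complex'') (use assms in simp)
  moreover have "of_real (exp t) powr (-s - of_nat k) * of_real (exp (-t)) ^ k
                   = exp (-(of_real t * (s + 2 * of_nat k)))" for k
  proof -
    have "of_real (exp t) powr (-s - of_nat k) * of_real (exp (-t)) ^ k
            = exp ((-s - of_nat k) * of_real t) * exp (of_nat k * of_real (-t))"
      by (simp add: powr_def Ln_of_real exp_of_nat_mult[symmetric] exp_of_real[symmetric])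
    also have "\<dots> = exp (-(of_real t * (s + 2 * of_nat k)))"
      by (simp add: exp_add[symmetric] algebra_simps)
    finally show ?thesis .
  qed
  ultimately show ?thesis by (simp add: mult.assoc)
qed

lemma norm_gbinomial_mult_exp_le:
  assumes "L > 0"
  shows "norm (((-s) gchoose k) * exp (-(of_nat (2*n+1) * of_real L * (s + 2 * of_nat k))))
           \<le> exp (-(real (2*n+1) * L * Re s)) * (pochhammer (norm s) k / fact k * exp (-2*L) ^ k)"
proof -
  have binom: "norm ((-s) gchoose k) \<le> pochhammer (norm s) k / fact k"
    by (rule norm_gbinomial_le) simp
  have "norm (exp (-(of_nat (2*n+1) * of_real L * (s + 2 * of_nat k))))
          = exp (-(real (2*n+1) * L * Re s)) * exp (-(real (2*n+1) * (2 * L * real k)))"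
    by (simp add: norm_exp_eq_Re exp_add[symmetric] algebra_simps)
  also have "exp (-(real (2*n+1) * (2 * L * real k))) \<le> exp (-(2 * L * real k))"
    using assms by (intro exp_mono) (simp add: algebra_simps)
  also have "exp (-(2 * L * real k)) = exp (-2*L) ^ k"
    by (simp add: exp_of_nat_mult[symmetric] algebra_simps)
  finally have exp: "norm (exp (-(of_nat (2*n+1) * of_real L * (s + 2 * of_nat k))))
                       \<le> exp (-(real (2*n+1) * L * Re s)) * exp (-2*L) ^ k"
    by simp
  have "norm (((-s) gchoose k) * exp (-(of_nat (2*n+1) * of_real L * (s + 2 * of_nat k))))
          \<le> (pochhammer (norm s) k / fact k) * (exp (-(real (2*n+1) * L * Re s)) * exp (-2*L) ^ k)"
    unfolding norm_mult
    by (rule mult_mono[OF binom exp order_trans[OF norm_ge_zero binom] norm_ge_zero])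
  thus ?thesis by (simp add: mult_ac)
qed

lemma odd_exp_plus_exp_powr_sums:
  assumes L: "L > 0" and s: "Re s > 0"
  shows "(\<lambda>n. of_real (exp (real (2*n+1) * L) + exp (-(real (2*n+1) * L))) powr (-s))
           sums (\<Sum>k. csch_binomial_term L s k)"
proof (rule sums_swap_of_product_bound)
  fix n k
  show "norm (((-s) gchoose k) * exp (-(of_nat (2*n+1) * of_real L * (s + 2 * of_nat k))))
          \<le> exp (-(real (2*n+1) * L * Re s)) * (pochhammer (norm s) k / fact k * exp (-2*L) ^ k)"
    by (rule norm_gbinomial_mult_exp_le[OF L])
  show "0 \<le> exp (-(real (2*n+1) * L * Re s))" by simp
  show "0 \<le> pochhammer (norm s) k / fact k * exp (-2*L) ^ k"
    using s by (intro mult_nonneg_nonneg divide_nonneg_pos pochhammer_nonneg) auto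
  show "(\<lambda>k. ((-s) gchoose k) * exp (-(of_nat (2*n+1) * of_real L * (s + 2 * of_nat k))))
          sums (of_real (exp (real (2*n+1) * L) + exp (-(real (2*n+1) * L))) powr (-s))"
    using exp_plus_exp_powr_sums[of "real (2*n+1) * L" s] L by (simp add: mult.assoc)
  have "(\<lambda>n. exp (-(of_nat (2*n+1) * of_real L * (s + 2 * of_nat k)))) sums half_csch L (s + 2 * of_nat k)"
    by (rule half_csch_sums) (use L s in auto)
  thus "(\<lambda>n. ((-s) gchoose k) * exp (-(of_nat (2*n+1) * of_real L * (s + 2 * of_nat k))))
          sums csch_binomial_term L s k"
    unfolding csch_binomial_term_def by (rule sums_mult)
next
  have "exp (-(real (2*n+1) * L * Re s)) = exp (-(L * Re s)) * exp (-(2 * L * Re s)) ^ n" for n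
    by (simp add: exp_of_nat_mult[symmetric] exp_add[symmetric] algebra_simps)
  moreover have "summable (\<lambda>n. exp (-(L * Re s)) * exp (-(2 * L * Re s)) ^ n)"
    using L s by (intro summable_mult summable_geometric) simp
  ultimately show "summable (\<lambda>n. exp (-(real (2*n+1) * L * Re s)))"
    by simp
  show "summable (\<lambda>k. pochhammer (norm s) k / fact k * exp (-2*L) ^ k)"
    using L by (intro sums_summable[OF pochhammer_sums]) auto
qed

section \<open>Odd-index values of \<open>F_D\<close>\<close>

lemma sqrt_nat_irrational:
  assumes "squarefree D" and "D > (1::nat)"
  shows "sqrt (real D) \<notin> \<rat>"
proof
  assume "sqrt (real D) \<in> \<rat>"
  moreover have "algebraic_int (sqrt (real D))"
    by (intro algebraic_int_sqrt algebraic_int_of_nat)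
  ultimately have "sqrt (real D) \<in> \<int>"
    by (intro rational_algebraic_int_is_int)
  then obtain k :: nat where k: "sqrt (real D) = of_nat k"
    by (metis Ints_cases of_int_0_le_iff of_int_of_nat_eq real_sqrt_ge_zero of_nat_0_le_iff nonneg_int_cases)
  hence "D = k\<^sup>2"
    by (metis of_nat_eq_iff of_nat_power real_sqrt_pow2 of_nat_0_le_iff)
  hence "k dvd 1"
    using squarefreeD[OF assms(1), of k] by simp
  thus False using \<open>D = k\<^sup>2\<close> assms(2) by simp
qed

lemma qconj_of_int:
  assumes "squarefree D" and "D > (1::nat)"
  shows "qconj D (of_int c) = of_int c"
  unfolding qconj_def
proof (rule the_equality)
  show "\<exists>a b :: rat. of_int c = of_rat a + of_rat b * sqrt (real D) \<and> of_int c = of_rat a - of_rat b * sqrt (real D)"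
    by (rule exI[of _ "of_int c"], rule exI[of _ 0]) simp
next
  fix y assume "\<exists>a b :: rat. of_int c = of_rat a + of_rat b * sqrt (real D) \<and> y = of_rat a - of_rat b * sqrt (real D)"
  then obtain a b :: rat where ab: "of_int c = of_rat a + of_rat b * sqrt (real D)" "y = of_rat a - of_rat b * sqrt (real D)"
    by blast
  have "b = 0"
  proof (rule ccontr)
    assume "b \<noteq> 0"
    hence "sqrt (real D) = (of_int c - of_rat a) / of_rat b"
      using ab(1) by (simp add: field_simps)
    also have "\<dots> \<in> \<rat>" by (intro Rats_divide Rats_diff) auto
    finally show False using sqrt_nat_irrational[OF assms] by contradiction
  qed
  thus "y = of_int c" using ab by simp
qed

lemma odd_power_add_inverse_power:
  fixes u :: real
  assumes "u \<noteq> 0" and "odd m"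
  shows "u ^ m + inverse u ^ m = sgn u * (exp (real m * \<bar>ln \<bar>u\<bar>\<bar>) + exp (-(real m * \<bar>ln \<bar>u\<bar>\<bar>)))"
proof -
  have "sgn u ^ m = sgn u" and "inverse (sgn u) = sgn u"
    using assms by (cases "u > 0"; simp add: sgn_if)+
  hence "u ^ m + inverse u ^ m = sgn u * (\<bar>u\<bar> ^ m + inverse \<bar>u\<bar> ^ m)"
    by (subst (1 2) sgn_mult_abs[symmetric]) (simp add: power_mult_distrib distrib_left)
  also have "\<bar>u\<bar> ^ m + inverse \<bar>u\<bar> ^ m = exp (real m * ln \<bar>u\<bar>) + exp (-(real m * ln \<bar>u\<bar>))"
    using assms by (simp add: exp_of_nat_mult exp_minus power_inverse)
  also have "\<dots> = exp (real m * \<bar>ln \<bar>u\<bar>\<bar>) + exp (-(real m * \<bar>ln \<bar>u\<bar>\<bar>))"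
    by (cases "ln \<bar>u\<bar> \<ge> 0") auto
  finally show ?thesis .
qed

lemma F_D_odd_eq:
  assumes "squarefree D" and "D > 1" and "qnorm D (fund_unit D) = -1"
  obtains \<kappa> L where "L > 0"
    and "\<And>n. F_D D (2*n+1) = \<kappa> * (exp (real (2*n+1) * L) + exp (-(real (2*n+1) * L)))"
proof
  define u where "u = fund_unit D"
  have norm_u: "u * qconj D u = -1"
    using assms(3) by (simp add: qnorm_def u_def)
  hence "u \<noteq> 0" by auto
  have "qconj D 1 = 1" and "qconj D (-1) = -1"
    using qconj_of_int[OF assms(1,2), of 1] qconj_of_int[OF assms(1,2), of "-1"] by simp_all
  hence "\<bar>u\<bar> \<noteq> 1"
    using norm_u by (cases "u \<ge> 0") auto
  with \<open>u \<noteq> 0\<close> show "\<bar>ln \<bar>u\<bar>\<bar> > 0"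
    by simp
  have conj_u: "qconj D u = - inverse u"
    using norm_u \<open>u \<noteq> 0\<close> by (simp add: field_simps)
  fix n
  have "F_D D (2*n+1) = (u ^ (2*n+1) + inverse u ^ (2*n+1)) / sqrt (real (qdisc D))"
    unfolding F_D_def u_def[symmetric] conj_u by (simp add: power_minus_odd)
  also have "\<dots> = sgn u / sqrt (real (qdisc D)) *
      (exp (real (2*n+1) * \<bar>ln \<bar>u\<bar>\<bar>) + exp (-(real (2*n+1) * \<bar>ln \<bar>u\<bar>\<bar>)))"
    using odd_power_add_inverse_power[OF \<open>u \<noteq> 0\<close>, of "2*n+1"] by simp
  finally show "F_D D (2*n+1) = sgn u / sqrt (real (qdisc D)) *
      (exp (real (2*n+1) * \<bar>ln \<bar>u\<bar>\<bar>) + exp (-(real (2*n+1) * \<bar>ln \<bar>u\<bar>\<bar>)))" .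
qed

lemma of_real_mult_pos_powr:
  assumes "x > 0"
  shows "complex_of_real (c * x) powr z = of_real c powr z * of_real x powr z"
  using powr_times_real_left[of "of_real x" "of_real c" z] assms by (simp add: mult.commute)

theorem mainTheorem7:
  fixes D :: nat
  assumes "squarefree D" and "D > 1"
    and "qnorm D (fund_unit D) = -1"
  shows "\<exists>g. g meromorphic_on UNIV \<and> (\<forall>s. Re s > 0 \<longrightarrow> g s = Z_odd D s) \<and>
             (\<forall>j::nat. g analytic_on {- of_nat (2 * j + 1)} \<and> g (- of_nat (2 * j + 1)) = 0)"
proof -
  obtain \<kappa> L where L: "L > 0"
    and F: "\<And>n. F_D D (2*n+1) = \<kappa> * (exp (real (2*n+1) * L) + exp (-(real (2*n+1) * L)))"
    using F_D_odd_eq[OF assms] by blast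
  define A where "A s = complex_of_real \<kappa> powr (-s)" for s
  have A: "A analytic_on S" for S
    unfolding A_def analytic_on_holomorphic
    by (intro exI[of _ UNIV]) (auto intro!: holomorphic_intros)
  define g where "g s = A s * (\<Sum>k. csch_binomial_term L s k)" for s
  have "g meromorphic_on UNIV"
    unfolding g_def
    by (intro meromorphic_intros analytic_on_imp_meromorphic_on A meromorphic_on_csch_binomial_series L)
  moreover have "g s = Z_odd D s" if "Re s > 0" for s
  proof -
    have "(\<lambda>n. complex_of_real (F_D D (2*n+1)) powr (-s)) sums g s"
      unfolding F of_real_mult_pos_powr[OF add_pos_pos[OF exp_gt_zero exp_gt_zero]] g_def A_def
      by (intro sums_mult odd_exp_plus_exp_powr_sums L that)
    thus ?thesis by (simp add: Z_odd_def sums_iff)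
  qed
  moreover have "g analytic_on {- of_nat (2*j+1)} \<and> g (- of_nat (2*j+1)) = 0" for j
    using csch_binomial_series_neg_odd[OF L, of "2*j+1"] unfolding g_def
    by (auto intro!: analytic_intros A)
  ultimately show ?thesis by blast
qed

end
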